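(* Let $\vec o_L\in\mathbb Z_2^{m_L}$ denote the logical measurement results (after syndrome measurement and correction) of a Clifford circuit with some input codeword. Consider any undetectable circuit-level Pauli error corresponding to $e\in\mathcal P_{n(T+1)}$ in the spacetime code, arising from the circuit error together with the subsequent correction from some decoder. Then $$\mathbb P^{(e)}_L(\vec o_L)=\mathbb P_L(\vec o_L+\vec f_L(e)),$$ where $\mathbb P_L$ is the ideal logical outcome distribution, and the logical error $\vec f_L(e)\in\mathbb Z_2^{m_L}$ equals $(\langle e,L'(\vec u^L)\rangle)_{\vec u^L\in\mathcal K^L}$.
   Context: Pauli operators are taken without phases; $\langle A,B\rangle=0$ if $A,B$ commute and $1$ otherwise. A non-adaptive Clifford circuit on $n$ qubits has time steps $t=1,\dots,T$: at step $t$, Pauli measurements (if any) are performed at time slice $t-0.5$ and then a Clifford unitary $U_t$ is applied. For $t\le t'$ let $U_{t,t'}=U_{t'-1}\cdots U_t$. The spacetime code has $n(T+1)$ qubits $(q,t-0.5)$; for $F\in\mathcal P_{n(T+1)}$, $F_{t-0.5}$ is its component at slice $t-0.5$, and $\kappa_{t-0.5}(O)$ places $O\in\mathcal P_n$ at that slice with identity elsewhere. $(\overrightarrow F)_{t-0.5}=\prod_{t'=1}^{t}U_{t',t}F_{t'-0.5}U_{t',t}^\dagger$ and $(\overleftarrow F)_{t-0.5}=\prod_{t'=t}^{T+1}U_{t,t'}^\dagger F_{t'-0.5}U_{t,t'}$. A circuit error inserting $e_t$ before step $t$ is the spacetime Pauli $e=\prod_t\kappa_{t-0.5}(e_t)$.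 The input is a codeword of a stabilizer code with generators $S^{(\mathrm{ini})}_1,\dots,S^{(\mathrm{ini})}_s$, and the circuit measures $M^{(\mathrm{circ})}_1,\dots,M^{(\mathrm{circ})}_m$. $\vec E=(S^{(\mathrm{ini})}_1,\dots,S^{(\mathrm{ini})}_s,M^{(\mathrm{circ})}_1,\dots,M^{(\mathrm{circ})}_m)$, $t_j$ is the time step of $E_j$ ($0$ for initial stabilizers), and $\vec o\in\mathbb Z_2^{s+m}$ is the outcome vector. $\mathcal O^\perp$ is the set of parity checks $\vec u$ satisfied deterministically by noiseless outcomes; an error is undetectable if it flips no parity check. $\mathcal K^L$ is a set of $m_L$ linearly independent vectors $\vec u^L\in\mathbb Z_2^{s+m}$ such that in the noiseless circuit the logical outcomes are $\vec o_L=(\vec u^L\cdot\vec o)_{\vec u^L\in\mathcal K^L}$. Measured spacetime logical generators: $L'(\vec u^L)=\overleftarrow{\prod_{j=s+1}^{s+m}\kappa_{t_j-0.5}(E_j^{u^L_j})}$. Known fact (effect of faults): with error $e$ the physical outcome distribution becomes $\mathbb P(\vec o+\vec f(e))$, where $f(e)_j=0$ for $j\le s$ and $f(e)_{s+i}=\langle(\overrightarrow e)_{t_{s+i}-0.5},M^{(\mathrm{circ})}_i\rangle$. *)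

theory Defs
  imports "HOL-Probability.Probability"
begin

text \<open>A Pauli operator without phase on the qubit set indexed by 'q is a pair (x,z) of
  bit-vectors: qubit q carries X^(x q) Z^(z q).\<close>
type_synonym 'q pauli = "('q \<Rightarrow> bool) \<times> ('q \<Rightarrow> bool)"

definition is_pauli :: "'q set \<Rightarrow> 'q pauli \<Rightarrow> bool" where
  "is_pauli Q A \<longleftrightarrow> (\<forall>q. q \<notin> Q \<longrightarrow> \<not> fst A q \<and> \<not> snd A q)"

definition pid :: "'q pauli" where
  "pid = (\<lambda>_. False, \<lambda>_. False)"

definition pmul :: "'q pauli \<Rightarrow> 'q pauli \<Rightarrow> 'q pauli" where
  "pmul A B = (\<lambda>q. fst A q \<noteq> fst B q, \<lambda>q. snd A q \<noteq> snd B q)"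

text \<open>Finite product of phase-free Paulis (order irrelevant without phases).\<close>
definition pprod :: "('i \<Rightarrow> 'q pauli) \<Rightarrow> 'i set \<Rightarrow> 'q pauli" where
  "pprod f I = (\<lambda>q. odd (card {i\<in>I. fst (f i) q}), \<lambda>q. odd (card {i\<in>I. snd (f i) q}))"

text \<open>Commutation bracket on qubit set Q: True (=1) iff A and B anticommute, i.e. they
  anticommute on an odd number of qubits.\<close>
definition symp :: "'q set \<Rightarrow> 'q pauli \<Rightarrow> 'q pauli \<Rightarrow> bool" where
  "symp Q A B \<longleftrightarrow> odd (card {q\<in>Q. (fst A q \<and> snd B q) \<noteq> (snd A q \<and> fst B q)})"

definition nq :: "nat \<Rightarrow> nat set" where "nq n = {..<n}"

text \<open>Clifford action: U t P = U_t P U_t^dagger, Ua t P = U_t^dagger P U_t.\<close>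
definition clifford_action :: "nat \<Rightarrow> (nat pauli \<Rightarrow> nat pauli) \<Rightarrow> (nat pauli \<Rightarrow> nat pauli) \<Rightarrow> bool" where
  "clifford_action n U Ua \<longleftrightarrow>
     (\<forall>P. is_pauli (nq n) P \<longrightarrow> is_pauli (nq n) (U P) \<and> is_pauli (nq n) (Ua P)
          \<and> Ua (U P) = P \<and> U (Ua P) = P) \<and>
     (\<forall>P Q. is_pauli (nq n) P \<longrightarrow> is_pauli (nq n) Q \<longrightarrow>
          U (pmul P Q) = pmul (U P) (U Q) \<and> symp (nq n) (U P) (U Q) = symp (nq n) P Q)"

text \<open>ucomp U t k = conjugation by U_{t,t+k} = U_{t+k-1} \<dots> U_t.\<close>
fun ucomp :: "(nat \<Rightarrow> nat pauli \<Rightarrow> nat pauli) \<Rightarrow> nat \<Rightarrow> nat \<Rightarrow> nat pauli \<Rightarrow> nat pauli" where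
  "ucomp U t 0 = id"
| "ucomp U t (Suc k) = U (t + k) \<circ> ucomp U t k"

text \<open>uadjcomp Ua t k P = U_{t,t+k}^dagger P U_{t,t+k}.\<close>
fun uadjcomp :: "(nat \<Rightarrow> nat pauli \<Rightarrow> nat pauli) \<Rightarrow> nat \<Rightarrow> nat \<Rightarrow> nat pauli \<Rightarrow> nat pauli" where
  "uadjcomp Ua t 0 = id"
| "uadjcomp Ua t (Suc k) = uadjcomp Ua t k \<circ> Ua (t + k)"

text \<open>Spacetime qubit (q,t) stands for (q, t-0.5), with q < n and 1 \<le> t \<le> T+1.\<close>
definition stq :: "nat \<Rightarrow> nat \<Rightarrow> (nat \<times> nat) set" where
  "stq n T = {..<n} \<times> {1..T+1}"

definition slc :: "(nat \<times> nat) pauli \<Rightarrow> nat \<Rightarrow> nat pauli" where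
  "slc F t = (\<lambda>q. fst F (q, t), \<lambda>q. snd F (q, t))"

definition kappa :: "nat \<Rightarrow> nat pauli \<Rightarrow> (nat \<times> nat) pauli" where
  "kappa t A = (\<lambda>(q, t'). t' = t \<and> fst A q, \<lambda>(q, t'). t' = t \<and> snd A q)"

definition mkst :: "nat \<Rightarrow> nat \<Rightarrow> (nat \<Rightarrow> nat pauli) \<Rightarrow> (nat \<times> nat) pauli" where
  "mkst n T G = (\<lambda>(q, t). q < n \<and> 1 \<le> t \<and> t \<le> T + 1 \<and> fst (G t) q,
                 \<lambda>(q, t). q < n \<and> 1 \<le> t \<and> t \<le> T + 1 \<and> snd (G t) q)"

text \<open>Forward propagation: (F->)_{t-0.5} = prod_{t'=1}^{t} U_{t',t} F_{t'-0.5} U_{t',t}^dagger.\<close>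
definition fwd :: "nat \<Rightarrow> nat \<Rightarrow> (nat \<Rightarrow> nat pauli \<Rightarrow> nat pauli) \<Rightarrow> (nat \<times> nat) pauli \<Rightarrow> (nat \<times> nat) pauli" where
  "fwd n T U F = mkst n T (\<lambda>t. pprod (\<lambda>t'. ucomp U t' (t - t') (slc F t')) {1..t})"

text \<open>Backward propagation: (<-F)_{t-0.5} = prod_{t'=t}^{T+1} U_{t,t'}^dagger F_{t'-0.5} U_{t,t'}.\<close>
definition bwd :: "nat \<Rightarrow> nat \<Rightarrow> (nat \<Rightarrow> nat pauli \<Rightarrow> nat pauli) \<Rightarrow> (nat \<times> nat) pauli \<Rightarrow> (nat \<times> nat) pauli" where
  "bwd n T Ua F = mkst n T (\<lambda>t. pprod (\<lambda>t'. uadjcomp Ua t (t' - t) (slc F t')) {t..T+1})"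

section \<open>Outcome vectors over Z2 (as bool vectors indexed from 1)\<close>

definition vxor :: "(nat \<Rightarrow> bool) \<Rightarrow> (nat \<Rightarrow> bool) \<Rightarrow> nat \<Rightarrow> bool" where
  "vxor a b = (\<lambda>j. a j \<noteq> b j)"

definition vdot :: "nat \<Rightarrow> (nat \<Rightarrow> bool) \<Rightarrow> (nat \<Rightarrow> bool) \<Rightarrow> bool" where
  "vdot N u w \<longleftrightarrow> odd (card {j\<in>{1..N}. u j \<and> w j})"

definition supp_in :: "nat \<Rightarrow> (nat \<Rightarrow> bool) \<Rightarrow> bool" where
  "supp_in N u \<longleftrightarrow> (\<forall>j. u j \<longrightarrow> j \<in> {1..N})"

definition fvec :: "nat \<Rightarrow> nat \<Rightarrow> nat \<Rightarrow> nat \<Rightarrow> (nat \<Rightarrow> nat pauli \<Rightarrow> nat pauli)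
     \<Rightarrow> (nat \<Rightarrow> nat pauli) \<Rightarrow> (nat \<Rightarrow> nat) \<Rightarrow> (nat \<times> nat) pauli \<Rightarrow> nat \<Rightarrow> bool" where
  "fvec n T s m U E tt e = (\<lambda>j. s < j \<and> j \<le> s + m \<and> symp (nq n) (slc (fwd n T U e) (tt j)) (E j))"

definition parity_checks :: "nat \<Rightarrow> (nat \<Rightarrow> bool) pmf \<Rightarrow> (nat \<Rightarrow> bool) set" where
  "parity_checks N P = {u. supp_in N u \<and> (\<exists>c. \<forall>w\<in>set_pmf P. vdot N u w = c)}"

definition Lprime :: "nat \<Rightarrow> nat \<Rightarrow> nat \<Rightarrow> nat \<Rightarrow> (nat \<Rightarrow> nat pauli \<Rightarrow> nat pauli)
     \<Rightarrow> (nat \<Rightarrow> nat pauli) \<Rightarrow> (nat \<Rightarrow> nat) \<Rightarrow> (nat \<Rightarrow> bool) \<Rightarrow> (nat \<times> nat) pauli" where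
  "Lprime n T s m Ua E tt u =
     bwd n T Ua (pprod (\<lambda>j. kappa (tt j) (if u j then E j else pid)) {s+1..s+m})"

definition lin_indep_Z2 :: "nat \<Rightarrow> (nat \<Rightarrow> nat \<Rightarrow> bool) \<Rightarrow> bool" where
  "lin_indep_Z2 mL uL \<longleftrightarrow>
     (\<forall>c :: nat \<Rightarrow> bool. (\<forall>j. even (card {k\<in>{..<mL}. c k \<and> uL k j})) \<longrightarrow> (\<forall>k<mL. \<not> c k))"

definition logical :: "nat \<Rightarrow> nat \<Rightarrow> (nat \<Rightarrow> nat \<Rightarrow> bool) \<Rightarrow> (nat \<Rightarrow> bool) \<Rightarrow> nat \<Rightarrow> bool" where
  "logical N mL uL w = (\<lambda>k. k < mL \<and> vdot N (uL k) w)"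

end

theory Submission
  imports Defs "HOL-Library.Z2"
begin

text \<open>The logical outcomes are fixed \<open>\<int>\<^sub>2\<close>-linear functionals \<open>u\<^sup>L \<cdot> o\<close> of the physical
  outcomes, so a fault shifting \<open>o\<close> by \<open>f(e)\<close> shifts \<open>o\<^sub>L\<close> by \<open>(u\<^sup>L \<cdot> f(e))\<close>; this holds for
  every fault. It remains to identify \<open>u \<cdot> f(e)\<close>, the sum over the
  measurements \<open>j\<close> with \<open>u\<^sub>j = 1\<close> of \<open>\<langle>(e\<rightarrow>)\<^bsub>t\<^sub>j-0.5\<^esub>, M\<^sub>j\<rangle>\<close>, with \<open>\<langle>e, L'(u)\<rangle>\<close>. That sum is
  \<open>\<langle>e\<rightarrow>, F\<rangle>\<close> for \<open>F = \<Prod>\<^sub>j \<kappa>\<^bsub>t\<^sub>j-0.5\<^esub>(E\<^sub>j\<^bsup>u(j)\<^esup>)\<close>, and \<open>L'(u) = \<leftarrow>F\<close>. Since each Clifford preserves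
  the commutation bracket, \<open>U\<close> and \<open>U\<^sup>\<dagger>\<close> are adjoint for it, and exchanging the two sums
  over time slices turns \<open>\<langle>e, \<leftarrow>F\<rangle>\<close> into \<open>\<langle>e\<rightarrow>, F\<rangle>\<close>. All parities are computed as sums in
  the field \<open>bit\<close>.\<close>

lemma of_nat_bit_eq_of_bool_odd: "(of_nat k :: bit) = of_bool (odd k)"
  by (induction k) auto

lemma of_bool_odd_card_eq_sum:
  assumes "finite A"
  shows "(of_bool (odd (card {x\<in>A. P x})) :: bit) = (\<Sum>x\<in>A. of_bool (P x))"
proof -
  have "{x\<in>A. P x} = A \<inter> {x. P x}" by blast
  then show ?thesis using assms by (simp only: sum_of_bool_eq of_nat_bit_eq_of_bool_odd)
qed

lemma of_bool_neq_bit: "(of_bool (a \<noteq> b) :: bit) = of_bool a + of_bool b"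
  by (cases a; cases b) simp_all

lemma finite_nq [simp]: "finite (nq n)"
  by (simp add: nq_def)

lemma finite_stq [simp]: "finite (stq n T)"
  by (simp add: stq_def)

lemma symp_eq_sum:
  assumes "finite Q"
  shows "(of_bool (symp Q A B) :: bit)
    = (\<Sum>q\<in>Q. of_bool (fst A q) * of_bool (snd B q) + of_bool (snd A q) * of_bool (fst B q))"
  unfolding symp_def of_bool_odd_card_eq_sum[OF assms] of_bool_neq_bit of_bool_conj ..

lemma symp_commute: "symp Q A B = symp Q B A"
  unfolding symp_def by (rule arg_cong[where f = "\<lambda>S. odd (card S)"]) blast

lemma symp_pid_right [simp]: "symp Q A pid = False"
  by (simp add: symp_def pid_def)

lemma symp_pprod_left:
  assumes "finite Q" "finite I"
  shows "(of_bool (symp Q (pprod f I) C) :: bit) = (\<Sum>i\<in>I. of_bool (symp Q (f i) C))"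
proof -
  have "(of_bool (symp Q (pprod f I) C) :: bit)
      = (\<Sum>q\<in>Q. (\<Sum>i\<in>I. of_bool (fst (f i) q)) * of_bool (snd C q)
               + (\<Sum>i\<in>I. of_bool (snd (f i) q)) * of_bool (fst C q))"
    unfolding symp_eq_sum[OF assms(1)] pprod_def fst_conv snd_conv
      of_bool_odd_card_eq_sum[OF assms(2)] ..
  also have "\<dots> = (\<Sum>q\<in>Q. \<Sum>i\<in>I. of_bool (fst (f i) q) * of_bool (snd C q)
                               + of_bool (snd (f i) q) * of_bool (fst C q))"
    by (simp only: sum_distrib_right sum.distrib)
  also have "\<dots> = (\<Sum>i\<in>I. \<Sum>q\<in>Q. of_bool (fst (f i) q) * of_bool (snd C q)
                               + of_bool (snd (f i) q) * of_bool (fst C q))"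
    by (rule sum.swap)
  also have "\<dots> = (\<Sum>i\<in>I. of_bool (symp Q (f i) C))"
    unfolding symp_eq_sum[OF assms(1)] ..
  finally show ?thesis .
qed

lemma symp_pprod_right:
  assumes "finite Q" "finite I"
  shows "(of_bool (symp Q C (pprod f I)) :: bit) = (\<Sum>i\<in>I. of_bool (symp Q C (f i)))"
  using symp_pprod_left[OF assms] by (simp add: symp_commute)

lemma is_pauli_pprod:
  assumes "\<And>i. i \<in> I \<Longrightarrow> is_pauli Q (f i)"
  shows "is_pauli Q (pprod f I)"
  unfolding is_pauli_def pprod_def fst_conv snd_conv
proof (intro allI impI)
  fix q assume "q \<notin> Q"
  then have none: "{i\<in>I. fst (f i) q} = {}" "{i\<in>I. snd (f i) q} = {}"
    using assms by (auto simp: is_pauli_def)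
  show "\<not> odd (card {i\<in>I. fst (f i) q}) \<and> \<not> odd (card {i\<in>I. snd (f i) q})"
    unfolding none by simp
qed

lemma symp_stq_eq_sum_slc:
  "(of_bool (symp (stq n T) A B) :: bit)
    = (\<Sum>t\<in>{1..T+1}. of_bool (symp (nq n) (slc A t) (slc B t)))"
proof -
  define g :: "nat \<Rightarrow> nat \<Rightarrow> bit" where
    "g q t = of_bool (fst A (q,t)) * of_bool (snd B (q,t)) + of_bool (snd A (q,t)) * of_bool (fst B (q,t))"
    for q t
  have "(of_bool (symp (stq n T) A B) :: bit) = (\<Sum>(q,t)\<in>{..<n} \<times> {1..T+1}. g q t)"
    unfolding symp_eq_sum[OF finite_stq] by (rule sum.cong) (auto simp: g_def stq_def)
  also have "\<dots> = (\<Sum>t\<in>{1..T+1}. \<Sum>q\<in>{..<n}. g q t)"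
    by (simp only: sum.cartesian_product[symmetric] sum.swap[of _ "{..<n}"])
  also have "\<dots> = (\<Sum>t\<in>{1..T+1}. of_bool (symp (nq n) (slc A t) (slc B t)))"
    unfolding symp_eq_sum[OF finite_nq] g_def
    by (simp only: nq_def slc_def fst_conv snd_conv)
  finally show ?thesis .
qed

lemma symp_slc_mkst:
  assumes "t \<in> {1..T+1}"
  shows "symp (nq n) (slc (mkst n T G) t) X = symp (nq n) (G t) X"
proof -
  have "{q\<in>nq n. (fst (slc (mkst n T G) t) q \<and> snd X q) \<noteq> (snd (slc (mkst n T G) t) q \<and> fst X q)}
      = {q\<in>nq n. (fst (G t) q \<and> snd X q) \<noteq> (snd (G t) q \<and> fst X q)}"
    using assms by (auto simp: nq_def slc_def mkst_def)
  then show ?thesis unfolding symp_def by simp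
qed

lemma slc_kappa: "slc (kappa t X) t' = (if t' = t then X else pid)"
  by (auto simp: slc_def kappa_def pid_def)

lemma slc_pprod: "slc (pprod f I) t = pprod (\<lambda>i. slc (f i) t) I"
  by (simp add: slc_def pprod_def)

lemma is_pauli_slc: "is_pauli (stq n T) F \<Longrightarrow> is_pauli (nq n) (slc F t)"
  by (auto simp: is_pauli_def stq_def slc_def nq_def)

lemma symp_kappa_right:
  assumes "t \<in> {1..T+1}"
  shows "symp (stq n T) A (kappa t X) = symp (nq n) (slc A t) X"
proof -
  have "(of_bool (symp (stq n T) A (kappa t X)) :: bit)
      = (\<Sum>t'\<in>{1..T+1}. if t' = t then of_bool (symp (nq n) (slc A t) X) else 0)"
    unfolding symp_stq_eq_sum_slc by (rule sum.cong) (auto simp: slc_kappa)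
  also have "\<dots> = of_bool (symp (nq n) (slc A t) X)"
    using assms by simp
  finally show ?thesis by (simp only: of_bool_eq_iff)
qed

lemma clifford_actionD:
  assumes "clifford_action n U Ua" "is_pauli (nq n) P"
  shows "is_pauli (nq n) (U P)" "is_pauli (nq n) (Ua P)" "U (Ua P) = P"
  using assms unfolding clifford_action_def by blast+

lemma clifford_action_symp:
  assumes "clifford_action n U Ua" "is_pauli (nq n) P" "is_pauli (nq n) Q"
  shows "symp (nq n) (U P) (U Q) = symp (nq n) P Q"
  using assms unfolding clifford_action_def by blast

lemma clifford_symp_adjoint:
  assumes cliff: "clifford_action n U Ua" and "is_pauli (nq n) P" "is_pauli (nq n) Q"
  shows "symp (nq n) (U P) Q = symp (nq n) P (Ua Q)"
proof -
  have "symp (nq n) (U P) Q = symp (nq n) (U P) (U (Ua Q))"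
    using clifford_actionD(3)[OF cliff] assms(3) by simp
  also have "\<dots> = symp (nq n) P (Ua Q)"
    using clifford_action_symp[OF cliff] clifford_actionD(2)[OF cliff] assms(2,3) by simp
  finally show ?thesis .
qed

lemma is_pauli_ucomp:
  assumes "\<forall>i<k. clifford_action n (U (t+i)) (Ua (t+i))" "is_pauli (nq n) P"
  shows "is_pauli (nq n) (ucomp U t k P)"
  using assms
proof (induction k)
  case (Suc k)
  have cliff: "clifford_action n (U (t+k)) (Ua (t+k))"
    using Suc.prems(1) by simp
  have "is_pauli (nq n) (ucomp U t k P)"
    using Suc by simp
  then show ?case
    using clifford_actionD(1)[OF cliff] by simp
qed simp

lemma symp_ucomp_adjoint:
  assumes "\<forall>i<k. clifford_action n (U (t+i)) (Ua (t+i))" "is_pauli (nq n) P" "is_pauli (nq n) Q"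
  shows "symp (nq n) (ucomp U t k P) Q = symp (nq n) P (uadjcomp Ua t k Q)"
  using assms
proof (induction k arbitrary: Q)
  case (Suc k)
  have cliff: "clifford_action n (U (t+k)) (Ua (t+k))"
    using Suc.prems(1) by simp
  have "is_pauli (nq n) (ucomp U t k P)"
    using Suc.prems by (intro is_pauli_ucomp[where Ua = Ua]) auto
  then have "symp (nq n) (ucomp U t (Suc k) P) Q = symp (nq n) (ucomp U t k P) (Ua (t+k) Q)"
    using clifford_symp_adjoint[OF cliff _ Suc.prems(3)] by simp
  also have "\<dots> = symp (nq n) P (uadjcomp Ua t (Suc k) Q)"
    using Suc.IH Suc.prems clifford_actionD(2)[OF cliff] by simp
  finally show ?case .
qed simp

lemma sum_triangle_swap:
  "(\<Sum>i\<in>{a..b::nat}. \<Sum>j\<in>{i..b}. g i j) = (\<Sum>j\<in>{a..b}. \<Sum>i\<in>{a..j}. g i j)"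
proof -
  have "(\<Sum>i\<in>{a..b}. \<Sum>j\<in>{i..b}. g i j) = (\<Sum>i\<in>{a..b}. \<Sum>j\<in>{j. j \<in> {a..b} \<and> i \<le> j}. g i j)"
    by (intro sum.cong) auto
  also have "\<dots> = (\<Sum>j\<in>{a..b}. \<Sum>i\<in>{i. i \<in> {a..b} \<and> i \<le> j}. g i j)"
    by (rule sum.swap_restrict) auto
  also have "\<dots> = (\<Sum>j\<in>{a..b}. \<Sum>i\<in>{a..j}. g i j)"
    by (intro sum.cong) auto
  finally show ?thesis .
qed

lemma symp_bwd_eq_symp_fwd:
  assumes cliff: "\<forall>t\<in>{1..T}. clifford_action n (U t) (Ua t)"
    and e_pauli: "\<And>t. is_pauli (nq n) (slc e t)"
    and F_pauli: "\<And>t. is_pauli (nq n) (slc F t)"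
  shows "symp (stq n T) e (bwd n T Ua F) = symp (stq n T) (fwd n T U e) F"
proof -
  define g :: "nat \<Rightarrow> nat \<Rightarrow> bit" where
    "g t t' = of_bool (symp (nq n) (ucomp U t (t' - t) (slc e t)) (slc F t'))" for t t'
  have adjoint: "of_bool (symp (nq n) (slc e t) (uadjcomp Ua t (t' - t) (slc F t'))) = g t t'"
    if "t \<in> {1..T+1}" "t' \<in> {t..T+1}" for t t'
  proof -
    have "\<forall>i<t'-t. clifford_action n (U (t+i)) (Ua (t+i))"
      using cliff that by auto
    then show ?thesis
      unfolding g_def using symp_ucomp_adjoint[of "t' - t" n U t Ua "slc e t" "slc F t'"] e_pauli F_pauli
      by simp
  qed
  have "(of_bool (symp (stq n T) e (bwd n T Ua F)) :: bit)
      = (\<Sum>t\<in>{1..T+1}. of_bool (symp (nq n) (slc e t)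
                          (pprod (\<lambda>t'. uadjcomp Ua t (t' - t) (slc F t')) {t..T+1})))"
    unfolding symp_stq_eq_sum_slc bwd_def
    by (intro sum.cong refl) (simp add: symp_commute[of "nq n" "slc e _"] symp_slc_mkst)
  also have "\<dots> = (\<Sum>t\<in>{1..T+1}. \<Sum>t'\<in>{t..T+1}. g t t')"
    by (intro sum.cong refl) (simp add: symp_pprod_right adjoint)
  also have "\<dots> = (\<Sum>t'\<in>{1..T+1}. \<Sum>t\<in>{1..t'}. g t t')"
    by (rule sum_triangle_swap)
  also have "\<dots> = (\<Sum>t'\<in>{1..T+1}. of_bool (symp (nq n) (slc (fwd n T U e) t') (slc F t')))"
    unfolding g_def fwd_def by (intro sum.cong refl) (simp add: symp_pprod_left symp_slc_mkst)
  also have "\<dots> = of_bool (symp (stq n T) (fwd n T U e) F)"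
    by (rule symp_stq_eq_sum_slc[symmetric])
  finally show ?thesis
    by (simp only: of_bool_eq_iff)
qed

lemma symp_Lprime_eq_vdot_fvec:
  assumes cliff: "\<forall>t\<in>{1..T}. clifford_action n (U t) (Ua t)"
    and E_pauli: "\<forall>j\<in>{s+1..s+m}. is_pauli (nq n) (E j)"
    and tt_circ: "\<forall>j\<in>{s+1..s+m}. tt j \<in> {1..T}"
    and e_pauli: "is_pauli (stq n T) e"
  shows "symp (stq n T) e (Lprime n T s m Ua E tt u) = vdot (s + m) u (fvec n T s m U E tt e)"
proof -
  define F where "F = pprod (\<lambda>j. kappa (tt j) (if u j then E j else pid)) {s+1..s+m}"
  have F_pauli: "is_pauli (nq n) (slc F t)" for t
    unfolding F_def slc_pprod
    by (rule is_pauli_pprod) (use E_pauli in \<open>auto simp: slc_kappa is_pauli_def pid_def\<close>)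
  have "(of_bool (symp (stq n T) e (Lprime n T s m Ua E tt u)) :: bit)
      = of_bool (symp (stq n T) (fwd n T U e) F)"
    unfolding Lprime_def F_def[symmetric]
    using symp_bwd_eq_symp_fwd[OF cliff is_pauli_slc[OF e_pauli] F_pauli] by simp
  also have "\<dots> = (\<Sum>j\<in>{s+1..s+m}. of_bool (u j \<and> symp (nq n) (slc (fwd n T U e) (tt j)) (E j)))"
    unfolding F_def symp_pprod_right[OF finite_stq finite_atLeastAtMost]
  proof (rule sum.cong[OF refl])
    fix j assume "j \<in> {s+1..s+m}"
    then have "tt j \<in> {1..T}"
      using tt_circ by blast
    then have "tt j \<in> {1..T+1}"
      by simp
    then show "of_bool (symp (stq n T) (fwd n T U e) (kappa (tt j) (if u j then E j else pid)))
        = (of_bool (u j \<and> symp (nq n) (slc (fwd n T U e) (tt j)) (E j)) :: bit)"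
      by (simp add: symp_kappa_right)
  qed
  also have "\<dots> = (\<Sum>j\<in>{1..s+m}. of_bool (u j \<and> fvec n T s m U E tt e j))"
    by (rule sum.mono_neutral_cong_left) (auto simp: fvec_def)
  also have "\<dots> = of_bool (vdot (s + m) u (fvec n T s m U E tt e))"
    unfolding vdot_def by (rule of_bool_odd_card_eq_sum[symmetric]) simp
  finally show ?thesis
    by (simp only: of_bool_eq_iff)
qed

lemma vxor_vxor_cancel [simp]: "vxor (vxor w c) c = w"
  by (auto simp: vxor_def)

lemma vdot_vxor_right: "vdot N u (vxor w f) = (vdot N u w \<noteq> vdot N u f)"
proof -
  have "(of_bool (vdot N u (vxor w f)) :: bit)
      = (\<Sum>j\<in>{1..N}. of_bool (u j) * (of_bool (w j) + of_bool (f j)))"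
    unfolding vdot_def vxor_def of_bool_odd_card_eq_sum[OF finite_atLeastAtMost]
      of_bool_conj of_bool_neq_bit ..
  also have "\<dots> = of_bool (vdot N u w) + of_bool (vdot N u f)"
    unfolding vdot_def of_bool_odd_card_eq_sum[OF finite_atLeastAtMost] of_bool_conj
    by (simp only: distrib_left sum.distrib)
  finally show ?thesis
    by (simp only: of_bool_neq_bit[symmetric] of_bool_eq_iff)
qed

lemma logical_vxor:
  "logical N mL uL (vxor w f) = vxor (logical N mL uL w) (\<lambda>k. k < mL \<and> vdot N (uL k) f)"
  unfolding logical_def vdot_vxor_right by (auto simp: vxor_def)

lemma pmf_map_vxor: "pmf (map_pmf (\<lambda>w. vxor w c) P) w = pmf P (vxor w c)"
proof -
  have "inj (\<lambda>w. vxor w c)"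
    by (metis injI vxor_vxor_cancel)
  then have "pmf (map_pmf (\<lambda>w. vxor w c) P) (vxor (vxor w c) c) = pmf P (vxor w c)"
    by (rule pmf_map_inj')
  then show ?thesis
    by simp
qed

theorem lemma15:
  fixes n T s m mL :: nat
    and U Ua :: "nat \<Rightarrow> nat pauli \<Rightarrow> nat pauli"
    and E :: "nat \<Rightarrow> nat pauli"
    and tt :: "nat \<Rightarrow> nat"
    and uL :: "nat \<Rightarrow> nat \<Rightarrow> bool"
    and P Pe :: "(nat \<Rightarrow> bool) pmf"
    and e :: "(nat \<times> nat) pauli"
    and oL :: "nat \<Rightarrow> bool"
  assumes cliff: "\<forall>t\<in>{1..T}. clifford_action n (U t) (Ua t)"
    and E_pauli: "\<forall>j\<in>{1..s+m}. is_pauli (nq n) (E j)"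
    and tt_ini: "\<forall>j\<in>{1..s}. tt j = 0"
    and tt_circ: "\<forall>j\<in>{s+1..s+m}. tt j \<in> {1..T}"
    and P_supp: "\<forall>w\<in>set_pmf P. supp_in (s + m) w"
    and KL_supp: "\<forall>k<mL. supp_in (s + m) (uL k)"
    and KL_indep: "lin_indep_Z2 mL uL"
    and e_pauli: "is_pauli (stq n T) e"
    and undetectable: "\<forall>u\<in>parity_checks (s + m) P. \<not> vdot (s + m) u (fvec n T s m U E tt e)"
    and fault_effect: "\<forall>w. pmf Pe w = pmf P (vxor w (fvec n T s m U E tt e))"
  shows "pmf (map_pmf (logical (s + m) mL uL) Pe) oL
       = pmf (map_pmf (logical (s + m) mL uL) P)
           (vxor oL (\<lambda>k. k < mL \<and> symp (stq n T) e (Lprime n T s m Ua E tt (uL k))))"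
proof -
  let ?f = "fvec n T s m U E tt e"
  let ?logical = "logical (s + m) mL uL"
  let ?fL = "\<lambda>k. k < mL \<and> symp (stq n T) e (Lprime n T s m Ua E tt (uL k))"
  have E_circ: "\<forall>j\<in>{s+1..s+m}. is_pauli (nq n) (E j)"
    using E_pauli by simp
  have logical_shift: "?logical (vxor w ?f) = vxor (?logical w) ?fL" for w
    by (simp add: logical_vxor symp_Lprime_eq_vdot_fvec[OF cliff E_circ tt_circ e_pauli])
  have "Pe = map_pmf (\<lambda>w. vxor w ?f) P"
    by (rule pmf_eqI) (simp add: fault_effect pmf_map_vxor)
  then have "map_pmf ?logical Pe = map_pmf (\<lambda>x. vxor x ?fL) (map_pmf ?logical P)"
    by (simp add: map_pmf_comp logical_shift)
  then show ?thesis
    by (simp add: pmf_map_vxor)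
qed

end
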